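(* The hyperbolic plane $\mathbb H^2$ (with its geodesic segments) is drop complete, whereas its vertical extension $\mathbb H^2\times\mathbb R$ (with the product Riemannian metric and its geodesic segments) is not drop complete.
   Context: $\mathbb H^2$ denotes the hyperbolic plane, the complete simply connected Riemannian surface of constant curvature $-1$. In a space where any two points $a,b$ are joined by a unique geodesic segment $[a,b]$, a set $K$ is convex if $[a,b]\subseteq K$ for all $a,b\in K$; $\operatorname{conv}(H)$ is the intersection of all convex sets containing $H$; and the space is drop complete if for every convex set $K$ and every point $x_0$, $\operatorname{conv}(\{x_0\}\cup K)=\bigcup\{[x_0,x]\mid x\in K\}$. The vertical extension $\mathbb H^2\times\mathbb R$ carries the product metric; its geodesic segment from $(x_0,y_0)$ to $(x_1,y_1)$ is $t\mapsto(c(t),(1-t)y_0+ty_1)$, $t\in[0,1]$, where $c$ is the constant-speed geodesic of $\mathbb H^2$ from $x_0$ to $x_1$. *)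

theory Defs
  imports "HOL-Analysis.Analysis"
begin

text \<open>A space is given by a carrier set S and a segment operator seg, where
  seg a b is the (unique) geodesic segment [a,b].\<close>

definition convex_in :: "('a \<Rightarrow> 'a \<Rightarrow> 'a set) \<Rightarrow> 'a set \<Rightarrow> 'a set \<Rightarrow> bool" where
  "convex_in seg S K \<longleftrightarrow> K \<subseteq> S \<and> (\<forall>a\<in>K. \<forall>b\<in>K. seg a b \<subseteq> K)"

definition conv_in :: "('a \<Rightarrow> 'a \<Rightarrow> 'a set) \<Rightarrow> 'a set \<Rightarrow> 'a set \<Rightarrow> 'a set" where
  "conv_in seg S H = \<Inter>{K. convex_in seg S K \<and> H \<subseteq> K}"

definition drop_complete :: "('a \<Rightarrow> 'a \<Rightarrow> 'a set) \<Rightarrow> 'a set \<Rightarrow> bool" where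
  "drop_complete seg S \<longleftrightarrow>
     (\<forall>K x0. convex_in seg S K \<and> K \<noteq> {} \<and> x0 \<in> S \<longrightarrow>
        conv_in seg S (insert x0 K) = (\<Union>x\<in>K. seg x0 x))"

definition H2 :: "complex set" where
  "H2 = {z. Im z > 0}"

definition hdist :: "complex \<Rightarrow> complex \<Rightarrow> real" where
  "hdist z w = arcosh (1 + (cmod (z - w))\<^sup>2 / (2 * Im z * Im w))"

definition hgeodesic :: "complex \<Rightarrow> complex \<Rightarrow> (real \<Rightarrow> complex) \<Rightarrow> bool" where
  "hgeodesic a b c \<longleftrightarrow> c 0 = a \<and> c 1 = b \<and> (\<forall>t\<in>{0..1}. c t \<in> H2) \<and>
     (\<forall>s\<in>{0..1}. \<forall>t\<in>{0..1}. hdist (c s) (c t) = \<bar>s - t\<bar> * hdist a b)"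

definition hseg :: "complex \<Rightarrow> complex \<Rightarrow> complex set" where
  "hseg a b = {c t | c t. hgeodesic a b c \<and> t \<in> {0..1}}"

definition H2R :: "(complex \<times> real) set" where
  "H2R = H2 \<times> UNIV"

definition pseg :: "complex \<times> real \<Rightarrow> complex \<times> real \<Rightarrow> (complex \<times> real) set" where
  "pseg p q = {(c t, (1 - t) * snd p + t * snd q) | c t.
                 hgeodesic (fst p) (fst q) c \<and> t \<in> {0..1}}"

end

theory Submission
  imports Defs
begin

text \<open>
  Mapping the upper half-plane to the hyperboloid model and projecting radially to the plane
  (the Beltrami--Klein model) gives an injective map under which every geodesic segment becomes a
  straight segment. Convex sets and convex hulls therefore correspond to Euclidean ones, and drop
  completeness of \<open>\<bbbH>\<^sup>2\<close> is inherited from the identity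
  \<open>conv ({x\<^sub>0} \<union> K) = (\<Union>x\<in>K. [x\<^sub>0, x])\<close> for convex \<open>K\<close> in a real vector space.

  In \<open>\<bbbH>\<^sup>2 \<times> \<real>\<close> take \<open>K = [p, q] \<times> {0}\<close> and \<open>x\<^sub>0 = (i, 1)\<close>, with \<open>p, q\<close> symmetric
  about the imaginary axis. The midpoints of \<open>[x\<^sub>0, (p, 0)]\<close> and \<open>[x\<^sub>0, (q, 0)]\<close> have height
  \<open>1/2\<close>, hence so does the midpoint \<open>m\<close> of the segment joining them, and \<open>m\<close> lies in
  \<open>conv ({x\<^sub>0} \<union> K)\<close>. A point of height \<open>1/2\<close> on a segment \<open>[x\<^sub>0, (a, 0)]\<close> is the
  hyperbolic midpoint of \<open>i\<close> and \<open>a\<close>, lifted to height \<open>1/2\<close>. In the hyperboloid model midpoints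
  are normalised sums, and a short computation shows that for \<open>a \<in> [p, q]\<close> this never equals
  \<open>m\<close>.
\<close>

section \<open>Minkowski space and the hyperboloid model\<close>

text \<open>Minkowski space \<open>\<real>\<^sup>1\<^sup>,\<^sup>2\<close> is modelled as \<open>\<real> \<times> \<complex>\<close>: a time coordinate and a spatial plane.\<close>

definition mink :: "real \<times> complex \<Rightarrow> real \<times> complex \<Rightarrow> real" where
  "mink x y = fst x * fst y - snd x \<bullet> snd y"

lemma mink_commute: "mink x y = mink y x"
  by (simp add: mink_def inner_commute mult.commute)

lemma mink_add_left [simp]: "mink (x + y) z = mink x z + mink y z"
  and mink_add_right [simp]: "mink z (x + y) = mink z x + mink z y"
  and mink_diff_left [simp]: "mink (x - y) z = mink x z - mink y z"
  and mink_diff_right [simp]: "mink z (x - y) = mink z x - mink z y"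
  and mink_scaleR_left [simp]: "mink (c *\<^sub>R x) z = c * mink x z"
  and mink_scaleR_right [simp]: "mink z (c *\<^sub>R x) = c * mink z x"
  by (simp_all add: mink_def inner_add_left inner_add_right inner_diff_left inner_diff_right algebra_simps)

definition hyperboloid :: "(real \<times> complex) set" where
  "hyperboloid = {x. mink x x = 1 \<and> fst x > 0}"

lemma null_orthogonal_to_hyperboloid_eq_0:
  assumes A: "A \<in> hyperboloid" and wA: "mink w A = 0" and ww: "mink w w = 0"
  shows "w = 0"
proof -
  have A1: "fst A ^ 2 = 1 + norm (snd A) ^ 2"
    using A by (auto simp: hyperboloid_def mink_def dot_square_norm power2_eq_square)
  have w1: "fst w * fst A = snd w \<bullet> snd A" and w2: "fst w ^ 2 = norm (snd w) ^ 2"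
    using wA ww by (auto simp: mink_def dot_square_norm power2_eq_square)
  have "(fst w * fst A) ^ 2 \<le> (norm (snd w) * norm (snd A)) ^ 2"
    unfolding w1 using Cauchy_Schwarz_ineq2 by (metis abs_ge_zero power2_abs power_mono)
  also have "\<dots> = fst w ^ 2 * (fst A ^ 2 - 1)"
    by (simp add: A1 w2 power_mult_distrib)
  finally have "fst w ^ 2 = 0"
    by (simp add: power_mult_distrib algebra_simps)
  then show ?thesis
    using w2 by (simp add: prod_eq_iff)
qed

text \<open>The isometry of the upper half-plane onto the upper sheet of the hyperboloid.\<close>

definition hyperboloid_of :: "complex \<Rightarrow> real \<times> complex" where
  "hyperboloid_of z =
     ((cmod z ^ 2 + 1) / (2 * Im z), Complex ((cmod z ^ 2 - 1) / (2 * Im z)) (Re z / Im z))"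

definition halfplane_of :: "real \<times> complex \<Rightarrow> complex" where
  "halfplane_of x = Complex (Im (snd x) / (fst x - Re (snd x))) (1 / (fst x - Re (snd x)))"

lemma mink_hyperboloid_of:
  assumes "z \<in> H2" "w \<in> H2"
  shows "mink (hyperboloid_of z) (hyperboloid_of w) = 1 + (cmod (z - w))\<^sup>2 / (2 * Im z * Im w)"
proof -
  have "Im z > 0" "Im w > 0"
    using assms by (auto simp: H2_def)
  then show ?thesis
    unfolding mink_def hyperboloid_of_def cmod_power2 inner_complex_def
    by (simp add: field_simps) (simp add: algebra_simps power2_eq_square)
qed

lemma cosh_hdist: "z \<in> H2 \<Longrightarrow> w \<in> H2 \<Longrightarrow> cosh (hdist z w) = mink (hyperboloid_of z) (hyperboloid_of w)"
  by (simp add: hdist_def mink_hyperboloid_of H2_def)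

lemma hdist_eq_arcosh: "z \<in> H2 \<Longrightarrow> w \<in> H2 \<Longrightarrow> hdist z w = arcosh (mink (hyperboloid_of z) (hyperboloid_of w))"
  by (simp add: hdist_def mink_hyperboloid_of)

lemma hyperboloid_of_in_hyperboloid:
  assumes "z \<in> H2" shows "hyperboloid_of z \<in> hyperboloid"
  using mink_hyperboloid_of[OF assms assms] assms
  by (auto simp: hyperboloid_def H2_def hyperboloid_of_def intro!: divide_pos_pos add_nonneg_pos)

lemma hyperboloid_Re_less_fst:
  assumes "x \<in> hyperboloid" shows "Re (snd x) < fst x"
proof -
  have "fst x ^ 2 = 1 + Re (snd x) ^ 2 + Im (snd x) ^ 2" "fst x > 0"
    using assms by (auto simp: hyperboloid_def mink_def inner_complex_def power2_eq_square)
  then have "\<bar>Re (snd x)\<bar> ^ 2 < fst x ^ 2"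
    by (simp add: add_pos_nonneg)
  then show ?thesis
    using \<open>fst x > 0\<close> power2_less_imp_less by fastforce
qed

lemma halfplane_of_in_H2: "x \<in> hyperboloid \<Longrightarrow> halfplane_of x \<in> H2"
  using hyperboloid_Re_less_fst by (simp add: halfplane_of_def H2_def)

lemma halfplane_of_hyperboloid_of [simp]: "z \<in> H2 \<Longrightarrow> halfplane_of (hyperboloid_of z) = z"
  by (simp add: hyperboloid_of_def halfplane_of_def H2_def complex_eq_iff cmod_power2
      field_simps power2_eq_square)

lemma hyperboloid_of_halfplane_of [simp]:
  assumes "x \<in> hyperboloid" shows "hyperboloid_of (halfplane_of x) = x"
proof -
  obtain t w where x: "x = (t, w)" by fastforce
  define d where "d = t - Re w"
  have d: "d > 0"
    using hyperboloid_Re_less_fst[OF assms] by (simp add: x d_def)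
  have "t ^ 2 = 1 + Re w ^ 2 + Im w ^ 2"
    using assms by (auto simp: x hyperboloid_def mink_def inner_complex_def power2_eq_square)
  then have sq: "Im w ^ 2 + 1 = d * (t + Re w)"
    by (simp add: d_def algebra_simps power2_eq_square)
  have "cmod (halfplane_of x) ^ 2 = (Im w ^ 2 + 1) / d ^ 2"
    by (simp add: x halfplane_of_def d_def[symmetric] cmod_power2 power_divide add_divide_distrib)
  also have "\<dots> = (t + Re w) / d"
    unfolding sq using d by (simp add: power2_eq_square)
  finally have "cmod (halfplane_of x) ^ 2 = (t + Re w) / d" .
  then show ?thesis
    using d by (simp add: x hyperboloid_of_def halfplane_of_def d_def[symmetric] complex_eq_iff
        field_simps) (simp add: d_def)
qed

section \<open>Geodesics of the hyperbolic plane\<close>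

lemma hdist_self [simp]: "hdist z z = 0"
  by (simp add: hdist_def)

lemma hdist_pos:
  assumes "z \<in> H2" "w \<in> H2" "z \<noteq> w" shows "hdist z w > 0"
proof -
  have "(cmod (z - w))\<^sup>2 / (2 * Im z * Im w) > 0"
    using assms by (simp add: H2_def)
  with assms show ?thesis
    by (simp add: hdist_def arcosh_real_gt_1_iff H2_def)
qed

lemma hyperboloid_between:
  assumes A: "A \<in> hyperboloid" and B: "B \<in> hyperboloid" and P: "P \<in> hyperboloid"
    and AP: "mink A P = cosh u" and PB: "mink P B = cosh v" and AB: "mink A B = cosh (u + v)"
    and S: "sinh (u + v) \<noteq> 0"
  shows "P = (sinh v / sinh (u + v)) *\<^sub>R A + (sinh u / sinh (u + v)) *\<^sub>R B"
proof -
  \<comment> \<open>\<open>w\<close> is orthogonal to \<open>A\<close>, \<open>B\<close> and \<open>P\<close>, hence null; a null vector orthogonal to the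
    timelike \<open>A\<close> vanishes.\<close>
  define w where "w = sinh (u + v) *\<^sub>R P - sinh v *\<^sub>R A - sinh u *\<^sub>R B"
  have unit: "mink A A = 1" "mink B B = 1" "mink P P = 1"
    using A B P by (simp_all add: hyperboloid_def)
  have PA: "mink P A = cosh u" and BA: "mink B A = cosh (u + v)" and BP: "mink B P = cosh v"
    using AP AB PB by (simp_all add: mink_commute)
  have sq: "cosh u ^ 2 = sinh u ^ 2 + 1" "cosh v ^ 2 = sinh v ^ 2 + 1"
    by (simp_all add: cosh_square_eq)
  have "mink w A = sinh (u + v) * cosh u - sinh v - sinh u * cosh (u + v)"
    using unit PA BA by (simp add: w_def)
  also have "\<dots> = 0"
    unfolding sinh_add cosh_add using sq by algebra
  finally have wA: "mink w A = 0" .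
  have "mink w B = sinh (u + v) * cosh v - sinh v * cosh (u + v) - sinh u"
    using unit PB AB by (simp add: w_def)
  also have "\<dots> = 0"
    unfolding sinh_add cosh_add using sq by algebra
  finally have wB: "mink w B = 0" .
  have "mink w P = sinh (u + v) - sinh v * cosh u - sinh u * cosh v"
    using unit AP BP by (simp add: w_def)
  also have "\<dots> = 0"
    unfolding sinh_add by algebra
  finally have wP: "mink w P = 0" .
  have "mink w w = 0"
    using wA wB wP by (simp add: w_def)
  then have "w = 0"
    using null_orthogonal_to_hyperboloid_eq_0[OF A wA] by simp
  then have "sinh (u + v) *\<^sub>R P = sinh v *\<^sub>R A + sinh u *\<^sub>R B"
    by (simp add: w_def algebra_simps)
  then have "P = inverse (sinh (u + v)) *\<^sub>R (sinh v *\<^sub>R A + sinh u *\<^sub>R B)"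
    using S by (metis scaleR_left_imp_eq right_inverse scaleR_one scaleR_scaleR)
  then show ?thesis
    by (simp add: scaleR_add_right divide_inverse_commute)
qed

lemma sinh_interpolation:
  fixes D x y :: real
  shows "sinh (D - x) * sinh (D - y) + sinh x * sinh y
           + (sinh (D - x) * sinh y + sinh x * sinh (D - y)) * cosh D
         = cosh (x - y) * (sinh D)\<^sup>2"
proof -
  have "cosh D ^ 2 = sinh D ^ 2 + 1" "cosh x ^ 2 = sinh x ^ 2 + 1" "cosh y ^ 2 = sinh y ^ 2 + 1"
    by (simp_all add: cosh_square_eq)
  then show ?thesis
    unfolding sinh_diff cosh_diff by algebra
qed

lemma sinh_interpolation_pos:
  fixes D t p q :: real
  assumes D: "D > 0" and t: "t \<in> {0..1}" and pq: "p > 0" "q > 0"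
  shows "sinh ((1 - t) * D) * p + sinh (t * D) * q > 0"
proof (cases "t = 0")
  case True
  then show ?thesis using D pq by simp
next
  case False
  then have "sinh (t * D) * q > 0"
    using D t pq by simp
  moreover have "sinh ((1 - t) * D) * p \<ge> 0"
    using D t pq by simp
  ultimately show ?thesis by linarith
qed

definition geodesic_lift :: "complex \<Rightarrow> complex \<Rightarrow> real \<Rightarrow> real \<times> complex" where
  "geodesic_lift a b t =
     (sinh ((1 - t) * hdist a b) / sinh (hdist a b)) *\<^sub>R hyperboloid_of a
     + (sinh (t * hdist a b) / sinh (hdist a b)) *\<^sub>R hyperboloid_of b"

lemma mink_geodesic_lift:
  assumes a: "a \<in> H2" and b: "b \<in> H2" and ab: "a \<noteq> b"
  shows "mink (geodesic_lift a b s) (geodesic_lift a b t) = cosh ((s - t) * hdist a b)"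
proof -
  define D where "D = hdist a b"
  have S: "sinh D > 0"
    using hdist_pos[OF a b ab] by (simp add: D_def)
  have unit: "mink (hyperboloid_of a) (hyperboloid_of a) = 1" "mink (hyperboloid_of b) (hyperboloid_of b) = 1"
    using hyperboloid_of_in_hyperboloid a b by (simp_all add: hyperboloid_def)
  have ab_ba: "mink (hyperboloid_of a) (hyperboloid_of b) = cosh D" "mink (hyperboloid_of b) (hyperboloid_of a) = cosh D"
    using cosh_hdist[OF a b] mink_commute by (simp_all add: D_def)
  have e: "(1 - s) * D = D - s * D" "(1 - t) * D = D - t * D" "(s - t) * D = s * D - t * D"
    by (simp_all add: algebra_simps)
  have "mink (geodesic_lift a b s) (geodesic_lift a b t)
      = (sinh (D - s * D) * sinh (D - t * D) + sinh (s * D) * sinh (t * D)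
         + (sinh (D - s * D) * sinh (t * D) + sinh (s * D) * sinh (D - t * D)) * cosh D) / (sinh D)\<^sup>2"
    using S unfolding geodesic_lift_def D_def[symmetric] e
    by (simp add: unit ab_ba field_simps power2_eq_square)
  also have "\<dots> = cosh ((s - t) * D)"
    using S unfolding sinh_interpolation e by simp
  finally show ?thesis
    by (simp add: D_def)
qed

lemma geodesic_lift_in_hyperboloid:
  assumes a: "a \<in> H2" and b: "b \<in> H2" and ab: "a \<noteq> b" and t: "t \<in> {0..1}"
  shows "geodesic_lift a b t \<in> hyperboloid"
proof -
  define D where "D = hdist a b"
  have D: "D > 0"
    using hdist_pos[OF a b ab] by (simp add: D_def)
  have "fst (hyperboloid_of a) > 0" "fst (hyperboloid_of b) > 0"
    using hyperboloid_of_in_hyperboloid a b by (simp_all add: hyperboloid_def)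
  then have "sinh ((1 - t) * D) * fst (hyperboloid_of a) + sinh (t * D) * fst (hyperboloid_of b) > 0"
    by (rule sinh_interpolation_pos[OF D t])
  then have "fst (geodesic_lift a b t) > 0"
    using D by (simp add: geodesic_lift_def D_def[symmetric] add_divide_distrib[symmetric])
  then show ?thesis
    using mink_geodesic_lift[OF a b ab] by (simp add: hyperboloid_def)
qed

lemma geodesic_lift_0: "a \<in> H2 \<Longrightarrow> b \<in> H2 \<Longrightarrow> a \<noteq> b \<Longrightarrow> geodesic_lift a b 0 = hyperboloid_of a"
  and geodesic_lift_1: "a \<in> H2 \<Longrightarrow> b \<in> H2 \<Longrightarrow> a \<noteq> b \<Longrightarrow> geodesic_lift a b 1 = hyperboloid_of b"
  using hdist_pos[of a b] by (simp_all add: geodesic_lift_def)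

lemma hgeodesic_geodesic_lift:
  assumes a: "a \<in> H2" and b: "b \<in> H2" and ab: "a \<noteq> b"
  shows "hgeodesic a b (\<lambda>t. halfplane_of (geodesic_lift a b t))"
  unfolding hgeodesic_def
proof (intro conjI ballI)
  show "halfplane_of (geodesic_lift a b 0) = a" "halfplane_of (geodesic_lift a b 1) = b"
    using assms by (simp_all add: geodesic_lift_0 geodesic_lift_1)
  fix s t :: real
  assume s: "s \<in> {0..1}" and t: "t \<in> {0..1}"
  show "halfplane_of (geodesic_lift a b s) \<in> H2"
    using halfplane_of_in_H2 geodesic_lift_in_hyperboloid[OF assms s] .
  have "hdist (halfplane_of (geodesic_lift a b s)) (halfplane_of (geodesic_lift a b t))
      = arcosh (cosh ((s - t) * hdist a b))"
    using geodesic_lift_in_hyperboloid[OF assms] s t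
    by (simp add: hdist_eq_arcosh halfplane_of_in_H2 mink_geodesic_lift[OF assms])
  also have "\<dots> = \<bar>s - t\<bar> * hdist a b"
    using hdist_pos[OF assms] by (metis abs_mult abs_of_pos arcosh_cosh_real cosh_real_abs abs_ge_zero)
  finally show "hdist (halfplane_of (geodesic_lift a b s)) (halfplane_of (geodesic_lift a b t))
      = \<bar>s - t\<bar> * hdist a b" .
qed

lemma hdist_hgeodesic:
  assumes c: "hgeodesic a b c" and t: "t \<in> {0..1}"
  shows "hdist a (c t) = t * hdist a b" "hdist (c t) b = (1 - t) * hdist a b"
proof -
  have ends: "c 0 = a" "c 1 = b"
    and dist: "\<forall>s\<in>{0..1}. \<forall>t\<in>{0..1}. hdist (c s) (c t) = \<bar>s - t\<bar> * hdist a b"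
    using c unfolding hgeodesic_def by blast+
  have "hdist (c 0) (c t) = \<bar>0 - t\<bar> * hdist a b" "hdist (c t) (c 1) = \<bar>t - 1\<bar> * hdist a b"
    using dist t by simp_all
  then show "hdist a (c t) = t * hdist a b" "hdist (c t) b = (1 - t) * hdist a b"
    using t by (simp_all add: ends)
qed

lemma hyperboloid_of_hgeodesic:
  assumes a: "a \<in> H2" and b: "b \<in> H2" and ab: "a \<noteq> b"
    and c: "hgeodesic a b c" and t: "t \<in> {0..1}"
  shows "hyperboloid_of (c t) = geodesic_lift a b t"
proof -
  define D where "D = hdist a b"
  have ct: "c t \<in> H2"
    using c t by (simp add: hgeodesic_def)
  have "hdist a (c t) = t * D" "hdist (c t) b = (1 - t) * D"
    using hdist_hgeodesic[OF c t] by (simp_all add: D_def)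
  then have "mink (hyperboloid_of a) (hyperboloid_of (c t)) = cosh (t * D)"
    "mink (hyperboloid_of (c t)) (hyperboloid_of b) = cosh ((1 - t) * D)"
    using cosh_hdist a b ct by metis+
  moreover have "mink (hyperboloid_of a) (hyperboloid_of b) = cosh (t * D + (1 - t) * D)"
    using cosh_hdist[OF a b] by (simp add: D_def algebra_simps)
  ultimately have "hyperboloid_of (c t)
      = (sinh ((1 - t) * D) / sinh (t * D + (1 - t) * D)) *\<^sub>R hyperboloid_of a
        + (sinh (t * D) / sinh (t * D + (1 - t) * D)) *\<^sub>R hyperboloid_of b"
    using hdist_pos[OF a b ab] hyperboloid_of_in_hyperboloid a b ct
    by (intro hyperboloid_between) (simp_all add: D_def algebra_simps)
  then show ?thesis
    by (simp add: geodesic_lift_def D_def algebra_simps)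
qed

lemma hseg_subset_H2: "hseg a b \<subseteq> H2"
  by (auto simp: hseg_def hgeodesic_def)

lemma in_hseg: "hgeodesic a b c \<Longrightarrow> t \<in> {0..1} \<Longrightarrow> c t \<in> hseg a b"
  unfolding hseg_def by blast

lemma hgeodesic_const: "a \<in> H2 \<Longrightarrow> hgeodesic a a (\<lambda>_. a)"
  by (simp add: hgeodesic_def)

lemma hgeodesic_self_eq:
  assumes a: "a \<in> H2" and c: "hgeodesic a a c" and t: "t \<in> {0..1}"
  shows "c t = a"
proof -
  have "c t \<in> H2" "hdist a (c t) = 0"
    using c t hdist_hgeodesic(1)[OF c t] by (simp_all add: hgeodesic_def)
  then show ?thesis
    using hdist_pos[OF a] by fastforce
qed

lemma hgeodesic_exists: "a \<in> H2 \<Longrightarrow> b \<in> H2 \<Longrightarrow> \<exists>c. hgeodesic a b c"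
  by (cases "a = b") (blast intro: hgeodesic_const hgeodesic_geodesic_lift)+

lemma hseg_self: "a \<in> H2 \<Longrightarrow> hseg a a = {a}"
  using hgeodesic_self_eq in_hseg[OF hgeodesic_const, of a 0] by (auto simp: hseg_def)

lemma hseg_eq_image:
  assumes a: "a \<in> H2" and b: "b \<in> H2" and ab: "a \<noteq> b"
  shows "hseg a b = (\<lambda>t. halfplane_of (geodesic_lift a b t)) ` {0..1}"
proof
  show "hseg a b \<subseteq> (\<lambda>t. halfplane_of (geodesic_lift a b t)) ` {0..1}"
  proof
    fix x assume "x \<in> hseg a b"
    then obtain c t where c: "hgeodesic a b c" and t: "t \<in> {0..1}" and x: "x = c t"
      by (auto simp: hseg_def)
    have "x = halfplane_of (hyperboloid_of (c t))"
      using c t x by (simp add: hgeodesic_def)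
    also have "\<dots> = halfplane_of (geodesic_lift a b t)"
      using hyperboloid_of_hgeodesic[OF a b ab c t] by simp
    finally show "x \<in> (\<lambda>t. halfplane_of (geodesic_lift a b t)) ` {0..1}"
      using t by blast
  qed
  show "(\<lambda>t. halfplane_of (geodesic_lift a b t)) ` {0..1} \<subseteq> hseg a b"
    using in_hseg[OF hgeodesic_geodesic_lift[OF a b ab]] by blast
qed

section \<open>The Beltrami--Klein model\<close>

text \<open>Radial projection of the hyperboloid to the plane at time \<open>1\<close>; it maps geodesics onto
  straight chords of the unit disc.\<close>

definition klein_proj :: "real \<times> complex \<Rightarrow> complex" where
  "klein_proj x = snd x /\<^sub>R fst x"

definition klein :: "complex \<Rightarrow> complex" where
  "klein z = klein_proj (hyperboloid_of z)"

lemma klein_proj_scaleR: "c \<noteq> 0 \<Longrightarrow> klein_proj (c *\<^sub>R x) = klein_proj x"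
  by (simp add: klein_proj_def)

lemma klein_proj_combination:
  assumes "fst A \<noteq> 0" "fst B \<noteq> 0" "\<alpha> * fst A + \<beta> * fst B \<noteq> 0"
  shows "klein_proj (\<alpha> *\<^sub>R A + \<beta> *\<^sub>R B)
    = (1 - \<beta> * fst B / (\<alpha> * fst A + \<beta> * fst B)) *\<^sub>R klein_proj A
      + (\<beta> * fst B / (\<alpha> * fst A + \<beta> * fst B)) *\<^sub>R klein_proj B"
  using assms by (simp add: klein_proj_def complex_eq_iff field_simps)

lemma inj_on_klein_proj: "inj_on klein_proj hyperboloid"
proof
  fix x y assume x: "x \<in> hyperboloid" and y: "y \<in> hyperboloid" and xy: "klein_proj x = klein_proj y"
  define r where "r = fst x / fst y"
  have pos: "fst x > 0" "fst y > 0" "r > 0"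
    using x y by (simp_all add: hyperboloid_def r_def)
  have "snd x = fst x *\<^sub>R klein_proj x"
    using pos by (simp add: klein_proj_def)
  also have "\<dots> = r *\<^sub>R snd y"
    unfolding xy using pos by (simp add: klein_proj_def r_def divide_inverse)
  finally have "snd x = r *\<^sub>R snd y" .
  then have xr: "x = r *\<^sub>R y"
    using pos by (simp add: prod_eq_iff r_def)
  then have "r\<^sup>2 = 1"
    using x y by (simp add: hyperboloid_def power2_eq_square)
  then have "r = 1"
    using pos by (simp add: power2_eq_1_iff)
  then show "x = y"
    using xr by simp
qed

lemma inj_on_klein: "inj_on klein H2"
proof -
  have "inj_on hyperboloid_of H2"
    by (rule inj_on_inverseI[of _ halfplane_of]) simp
  moreover have "inj_on klein_proj (hyperboloid_of ` H2)"
    by (rule inj_on_subset[OF inj_on_klein_proj]) (auto intro: hyperboloid_of_in_hyperboloid)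
  moreover have "klein = klein_proj \<circ> hyperboloid_of"
    by (simp add: fun_eq_iff klein_def)
  ultimately show ?thesis
    by (metis comp_inj_on)
qed

lemma reparametrized_closed_segment:
  fixes x y :: "'a::real_vector" and f :: "real \<Rightarrow> real"
  assumes f: "continuous_on {0..1} f" "f 0 = 0" "f 1 = 1" "f ` {0..1} \<subseteq> {0..1}"
  shows "(\<lambda>t. (1 - f t) *\<^sub>R x + f t *\<^sub>R y) ` {0..1} = closed_segment x y"
proof -
  have "{0..1} \<subseteq> f ` {0..1}"
  proof
    fix u :: real assume "u \<in> {0..1}"
    then obtain t where "0 \<le> t" "t \<le> 1" "f t = u"
      using IVT'[of f 0 u 1] f by auto
    then show "u \<in> f ` {0..1}" by force
  qed
  with f(4) have "f ` {0..1} = {0..1}" by blast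
  then have "(\<lambda>u. (1 - u) *\<^sub>R x + u *\<^sub>R y) ` f ` {0..1} = closed_segment x y"
    by (simp add: closed_segment_image_interval)
  then show ?thesis
    by (simp add: image_image)
qed

lemma klein_image_hseg:
  assumes a: "a \<in> H2" and b: "b \<in> H2"
  shows "klein ` hseg a b = closed_segment (klein a) (klein b)"
proof (cases "a = b")
  case True
  then show ?thesis
    using a by (simp add: hseg_self)
next
  case ab: False
  define D where "D = hdist a b"
  define A where "A = hyperboloid_of a"
  define B where "B = hyperboloid_of b"
  define f where "f t = sinh (t * D) * fst B / (sinh ((1 - t) * D) * fst A + sinh (t * D) * fst B)" for t
  have D: "D > 0"
    using hdist_pos[OF a b ab] by (simp add: D_def)
  have AB: "fst A > 0" "fst B > 0"
    using a b hyperboloid_of_in_hyperboloid by (simp_all add: A_def B_def hyperboloid_def)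
  have den: "sinh ((1 - t) * D) * fst A + sinh (t * D) * fst B > 0" if "t \<in> {0..1}" for t
    using sinh_interpolation_pos[OF D that AB] .
  have klein_lift: "klein (halfplane_of (geodesic_lift a b t)) = (1 - f t) *\<^sub>R klein a + f t *\<^sub>R klein b"
    if t: "t \<in> {0..1}" for t
  proof -
    have "geodesic_lift a b t = inverse (sinh D) *\<^sub>R (sinh ((1 - t) * D) *\<^sub>R A + sinh (t * D) *\<^sub>R B)"
      by (simp add: geodesic_lift_def A_def B_def D_def scaleR_add_right divide_inverse_commute)
    then have "klein_proj (geodesic_lift a b t) = klein_proj (sinh ((1 - t) * D) *\<^sub>R A + sinh (t * D) *\<^sub>R B)"
      using D by (simp add: klein_proj_scaleR)
    also have "\<dots> = (1 - f t) *\<^sub>R klein a + f t *\<^sub>R klein b"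
      using den[OF t] AB by (simp add: klein_proj_combination f_def klein_def A_def B_def)
    finally show ?thesis
      using geodesic_lift_in_hyperboloid[OF a b ab t] by (simp add: klein_def)
  qed
  have "continuous_on {0..1} f"
    unfolding f_def using den by (intro continuous_intros) (auto simp: less_le)
  moreover have "f 0 = 0" "f 1 = 1"
    using D AB by (simp_all add: f_def)
  moreover have "f ` {0..1} \<subseteq> {0..1}"
    using den D AB by (auto simp: f_def)
  ultimately have "(\<lambda>t. (1 - f t) *\<^sub>R klein a + f t *\<^sub>R klein b) ` {0..1} = closed_segment (klein a) (klein b)"
    by (rule reparametrized_closed_segment)
  moreover have "klein ` hseg a b = (\<lambda>t. (1 - f t) *\<^sub>R klein a + f t *\<^sub>R klein b) ` {0..1}"
    unfolding hseg_eq_image[OF a b ab] image_image using klein_lift by (rule image_cong[OF refl])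
  ultimately show ?thesis
    by simp
qed

section \<open>Drop completeness via straightening\<close>

locale straightening =
  fixes seg :: "'a \<Rightarrow> 'a \<Rightarrow> 'a set" and S :: "'a set" and f :: "'a \<Rightarrow> 'b::real_vector"
  assumes inj: "inj_on f S"
    and seg_subset: "\<And>a b. a \<in> S \<Longrightarrow> b \<in> S \<Longrightarrow> seg a b \<subseteq> S"
    and image_seg: "\<And>a b. a \<in> S \<Longrightarrow> b \<in> S \<Longrightarrow> f ` seg a b = closed_segment (f a) (f b)"
begin

lemma seg_eq_preimage:
  assumes "a \<in> S" "b \<in> S"
  shows "seg a b = {x \<in> S. f x \<in> closed_segment (f a) (f b)}"
proof
  show "seg a b \<subseteq> {x \<in> S. f x \<in> closed_segment (f a) (f b)}"
    using seg_subset[OF assms] image_seg[OF assms] by blast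
  show "{x \<in> S. f x \<in> closed_segment (f a) (f b)} \<subseteq> seg a b"
  proof clarify
    fix x assume "x \<in> S" "f x \<in> closed_segment (f a) (f b)"
    then obtain y where "y \<in> seg a b" "f y = f x"
      using image_seg[OF assms] by (metis imageE)
    then show "x \<in> seg a b"
      using seg_subset[OF assms] inj_onD[OF inj] \<open>x \<in> S\<close> by (metis subsetD)
  qed
qed

lemma ends_in_seg: "a \<in> S \<Longrightarrow> b \<in> S \<Longrightarrow> a \<in> seg a b \<and> b \<in> seg a b"
  by (simp add: seg_eq_preimage)

lemma convex_in_preimage:
  assumes "convex H"
  shows "convex_in seg S {x \<in> S. f x \<in> H}"
  using assms by (auto simp: convex_in_def seg_eq_preimage dest: closed_segment_subset)

lemma convex_in_seg: "a \<in> S \<Longrightarrow> b \<in> S \<Longrightarrow> convex_in seg S (seg a b)"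
  using convex_in_preimage[OF convex_closed_segment] by (simp add: seg_eq_preimage)

lemma convex_image:
  assumes "convex_in seg S K"
  shows "convex (f ` K)"
  unfolding convex_contains_segment
proof (intro ballI)
  fix u v assume "u \<in> f ` K" "v \<in> f ` K"
  then obtain a b where "a \<in> K" "b \<in> K" "u = f a" "v = f b"
    by blast
  then have "seg a b \<subseteq> K" "a \<in> S" "b \<in> S"
    using assms by (auto simp: convex_in_def)
  then show "closed_segment u v \<subseteq> f ` K"
    using image_seg \<open>u = f a\<close> \<open>v = f b\<close> by (metis image_mono)
qed

theorem drop_complete: "drop_complete seg S"
  unfolding drop_complete_def
proof clarify
  fix K x0
  assume K: "convex_in seg S K" and "K \<noteq> {}" and x0: "x0 \<in> S"
  have KS: "K \<subseteq> S"
    using K by (simp add: convex_in_def)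
  define U where "U = (\<Union>x\<in>K. seg x0 x)"
  have "convex hull (insert (f x0) (f ` K)) = (\<Union>x\<in>K. closed_segment (f x0) (f x))"
    using \<open>K \<noteq> {}\<close> convex_image[OF K] by (simp add: convex_hull_insert_segments hull_same)
  moreover have "U = (\<Union>x\<in>K. {z \<in> S. f z \<in> closed_segment (f x0) (f x)})"
    unfolding U_def using x0 KS by (intro SUP_cong refl) (auto simp: seg_eq_preimage)
  ultimately have U: "U = {z \<in> S. f z \<in> convex hull (insert (f x0) (f ` K))}"
    by blast
  have "convex_in seg S U"
    unfolding U by (rule convex_in_preimage[OF convex_convex_hull])
  moreover have "insert x0 K \<subseteq> U"
    using x0 KS \<open>K \<noteq> {}\<close> ends_in_seg by (auto simp: U_def)
  ultimately have "conv_in seg S (insert x0 K) \<subseteq> U"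
    unfolding conv_in_def by blast
  moreover have "U \<subseteq> conv_in seg S (insert x0 K)"
    unfolding U_def conv_in_def convex_in_def by blast
  ultimately show "conv_in seg S (insert x0 K) = (\<Union>x\<in>K. seg x0 x)"
    by (simp add: U_def)
qed

end

interpretation hyperbolic: straightening hseg H2 klein
  using inj_on_klein hseg_subset_H2 klein_image_hseg by unfold_locales

section \<open>The vertical extension is not drop complete\<close>

lemma hgeodesic_midpoint:
  assumes a: "a \<in> H2" and b: "b \<in> H2" and c: "hgeodesic a b c"
  shows "hyperboloid_of (c (1/2))
    = inverse (2 * cosh (hdist a b / 2)) *\<^sub>R (hyperboloid_of a + hyperboloid_of b)"
proof (cases "a = b")
  case True
  then show ?thesis
    using hgeodesic_self_eq[OF a, of c "1/2"] c by (simp add: scaleR_2[symmetric])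
next
  case False
  define D where "D = hdist a b"
  have "sinh (D / 2) > 0"
    using hdist_pos[OF a b False] by (simp add: D_def)
  moreover have "sinh D = 2 * sinh (D / 2) * cosh (D / 2)"
    using sinh_double[of "D / 2"] by simp
  ultimately have ratio: "sinh (D / 2) / sinh D = inverse (2 * cosh (D / 2))"
    by (simp add: field_simps)
  have "hyperboloid_of (c (1/2)) = (sinh (D / 2) / sinh D) *\<^sub>R (hyperboloid_of a + hyperboloid_of b)"
    using hyperboloid_of_hgeodesic[OF a b False c, of "1/2"]
    by (simp add: geodesic_lift_def D_def[symmetric] scaleR_add_right)
  then show ?thesis
    unfolding D_def[symmetric] ratio[symmetric] .
qed

lemma midpoint_in_pseg:
  "hgeodesic (fst x) (fst y) c \<Longrightarrow> (c (1/2), (snd x + snd y) / 2) \<in> pseg x y"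
  unfolding pseg_def by (rule CollectI, rule exI[of _ c], rule exI[of _ "1/2"]) (simp add: field_simps)

lemma pseg_at_midheight:
  assumes "(z, (snd x + snd y) / 2) \<in> pseg x y" and "snd x \<noteq> snd y"
  obtains c where "hgeodesic (fst x) (fst y) c" and "z = c (1/2)"
proof -
  obtain c t where c: "hgeodesic (fst x) (fst y) c" and z: "z = c t"
    and h: "(snd x + snd y) / 2 = (1 - t) * snd x + t * snd y"
    using assms(1) unfolding pseg_def by blast
  have "(t - 1/2) * (snd y - snd x) = 0"
    using h by (simp add: field_simps)
  then have "t = 1/2"
    using assms(2) by simp
  then show ?thesis
    using that c z by blast
qed

lemma convex_in_pseg_slice:
  assumes C: "convex_in hseg H2 C"
  shows "convex_in pseg H2R (C \<times> {h})"
  unfolding convex_in_def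
proof (intro conjI ballI subsetI)
  show "x \<in> H2R" if "x \<in> C \<times> {h}" for x
    using that C by (auto simp: convex_in_def H2R_def)
  fix x y z assume x: "x \<in> C \<times> {h}" and y: "y \<in> C \<times> {h}" and z: "z \<in> pseg x y"
  then obtain c t where c: "hgeodesic (fst x) (fst y) c" and t: "t \<in> {0..1}"
    and z: "z = (c t, (1 - t) * h + t * h)"
    unfolding pseg_def by auto
  have "c t \<in> C"
    using in_hseg[OF c t] C x y unfolding convex_in_def by force
  then show "z \<in> C \<times> {h}"
    by (simp add: z algebra_simps)
qed

definition right_point :: complex where "right_point = Complex (9/13) (20/13)"
definition left_point :: complex where "left_point = Complex (-9/13) (20/13)"

lemma points_in_H2: "\<i> \<in> H2" "right_point \<in> H2" "left_point \<in> H2"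
  by (simp_all add: H2_def right_point_def left_point_def)

lemma hyperboloid_of_points:
  "hyperboloid_of \<i> = (1, 0)"
  "hyperboloid_of right_point = (5/4, Complex (3/5) (9/20))"
  "hyperboloid_of left_point = (5/4, Complex (3/5) (-9/20))"
  by (simp_all add: hyperboloid_of_def right_point_def left_point_def cmod_def power2_eq_square
      complex_eq_iff)

lemma hdist_i_points: "hdist \<i> right_point = hdist \<i> left_point"
  by (simp add: hdist_def right_point_def left_point_def cmod_def)

lemma hyperboloid_of_sum_not_parallel:
  assumes a: "a \<in> hseg right_point left_point" and \<nu>: "\<nu> \<noteq> 0"
  shows "\<nu> *\<^sub>R (hyperboloid_of \<i> + hyperboloid_of a)
    \<noteq> \<mu> *\<^sub>R ((hyperboloid_of \<i> + hyperboloid_of right_point) + (hyperboloid_of \<i> + hyperboloid_of left_point))"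
proof
  \<comment> \<open>\<open>a\<close> lies on the chord \<open>Re = 12/25\<close> of the Klein disc, which forces the hyperboloid point
    \<open>(5/4, 3/5, 0)\<close>; but that point is not on the hyperboloid.\<close>
  assume eq: "\<nu> *\<^sub>R (hyperboloid_of \<i> + hyperboloid_of a)
    = \<mu> *\<^sub>R ((hyperboloid_of \<i> + hyperboloid_of right_point) + (hyperboloid_of \<i> + hyperboloid_of left_point))"
  obtain t w where A: "hyperboloid_of a = (t, w)"
    by fastforce
  have "a \<in> H2"
    using a hseg_subset_H2 by blast
  then have unit: "t\<^sup>2 - (Re w)\<^sup>2 - (Im w)\<^sup>2 = 1" and t: "t > 0"
    using hyperboloid_of_in_hyperboloid[of a]
    by (simp_all add: A hyperboloid_def mink_def inner_complex_def power2_eq_square)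
  have "klein a \<in> closed_segment (klein right_point) (klein left_point)"
    using a hyperbolic.image_seg points_in_H2 by blast
  then obtain u where "klein a = (1 - u) *\<^sub>R klein right_point + u *\<^sub>R klein left_point"
    unfolding closed_segment_def by blast
  then have "Re (klein a) = 12/25"
    by (simp add: klein_def klein_proj_def hyperboloid_of_points field_simps)
  then have klein_re: "Re w = 12/25 * t"
    using t by (simp add: klein_def klein_proj_def A field_simps)
  have e1: "\<nu> * (1 + t) = \<mu> * (9/2)" and e2: "\<nu> * Re w = \<mu> * (6/5)" and e3: "\<nu> * Im w = 0"
    using eq by (simp_all add: A hyperboloid_of_points prod_eq_iff complex_eq_iff algebra_simps)
  have "\<nu> * t = 5/2 * \<mu>"
    using e2 klein_re by (simp add: algebra_simps)
  then have "\<nu> = 2 * \<mu>" and "\<nu> * t = 5/4 * \<nu>"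
    using e1 by (simp_all add: algebra_simps)
  then have solution: "t = 5/4" "Re w = 3/5" "Im w = 0"
    using \<nu> e3 klein_re by simp_all
  show False
    using unit unfolding solution by (simp add: power2_eq_square)
qed

lemma convex_in_pseg_midpoint_of_midpoints:
  assumes C: "convex_in pseg H2R C" and xyz: "x \<in> C" "y \<in> C" "z \<in> C" "snd y = snd z"
    and cy: "hgeodesic (fst x) (fst y) cy" and cz: "hgeodesic (fst x) (fst z) cz"
    and c: "hgeodesic (cy (1/2)) (cz (1/2)) c"
  shows "(c (1/2), (snd x + snd y) / 2) \<in> C"
proof -
  have seg_C: "pseg u v \<subseteq> C" if "u \<in> C" "v \<in> C" for u v
    using C that by (simp add: convex_in_def)
  define h where "h = (snd x + snd y) / 2"
  have "(cy (1/2), h) \<in> pseg x y" "(cz (1/2), h) \<in> pseg x z"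
    using midpoint_in_pseg[OF cy] midpoint_in_pseg[OF cz] xyz(4) by (simp_all add: h_def)
  then have "(cy (1/2), h) \<in> C" "(cz (1/2), h) \<in> C"
    using seg_C xyz by blast+
  moreover have "(c (1/2), h) \<in> pseg (cy (1/2), h) (cz (1/2), h)"
    using midpoint_in_pseg[of "(cy (1/2), h)" "(cz (1/2), h)" c] c by simp
  ultimately show ?thesis
    using seg_C unfolding h_def by blast
qed

lemma midpoint_ne_midpoint_of_midpoints:
  assumes a: "a \<in> hseg right_point left_point" and c: "hgeodesic \<i> a c"
    and cr: "hgeodesic \<i> right_point cr" and cl: "hgeodesic \<i> left_point cl"
    and cm: "hgeodesic (cr (1/2)) (cl (1/2)) cm"
  shows "c (1/2) \<noteq> cm (1/2)"
proof
  assume eq: "c (1/2) = cm (1/2)"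
  have H2: "a \<in> H2" "cr (1/2) \<in> H2" "cl (1/2) \<in> H2"
    using a hseg_subset_H2 cr cl by (auto simp: hgeodesic_def)
  define \<kappa> where "\<kappa> = inverse (2 * cosh (hdist \<i> right_point / 2))"
  define \<rho> where "\<rho> = inverse (2 * cosh (hdist (cr (1/2)) (cl (1/2)) / 2))"
  have "inverse (2 * cosh (hdist \<i> a / 2)) *\<^sub>R (hyperboloid_of \<i> + hyperboloid_of a)
      = \<rho> *\<^sub>R (hyperboloid_of (cr (1/2)) + hyperboloid_of (cl (1/2)))"
    using hgeodesic_midpoint[OF _ H2(1) c] hgeodesic_midpoint[OF H2(2,3) cm] points_in_H2 eq
    by (simp add: \<rho>_def)
  also have "\<dots> = (\<rho> * \<kappa>) *\<^sub>R ((hyperboloid_of \<i> + hyperboloid_of right_point)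
      + (hyperboloid_of \<i> + hyperboloid_of left_point))"
    using hgeodesic_midpoint[OF _ _ cr] hgeodesic_midpoint[OF _ _ cl] points_in_H2
    by (simp add: \<kappa>_def hdist_i_points scaleR_add_right)
  finally show False
    using hyperboloid_of_sum_not_parallel[OF a] by (simp add: add_pos_pos)
qed

lemma not_drop_complete_H2R: "\<not> drop_complete pseg H2R"
proof
  assume drop: "drop_complete pseg H2R"
  define K where "K = hseg right_point left_point \<times> {0::real}"
  define x0 where "x0 = (\<i>, 1::real)"
  have "convex_in pseg H2R K"
    unfolding K_def using hyperbolic.convex_in_seg points_in_H2 by (intro convex_in_pseg_slice)
  moreover have ends: "(right_point, 0) \<in> K" "(left_point, 0) \<in> K"
    using hyperbolic.ends_in_seg points_in_H2 by (auto simp: K_def)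
  moreover have "x0 \<in> H2R"
    by (simp add: x0_def H2R_def points_in_H2)
  ultimately have hull: "conv_in pseg H2R (insert x0 K) = (\<Union>x\<in>K. pseg x0 x)"
    using drop unfolding drop_complete_def by blast
  obtain cr cl where cr: "hgeodesic \<i> right_point cr" and cl: "hgeodesic \<i> left_point cl"
    using hgeodesic_exists points_in_H2 by metis
  moreover have "cr (1/2) \<in> H2" "cl (1/2) \<in> H2"
    using cr cl by (simp_all add: hgeodesic_def)
  ultimately obtain cm where cm: "hgeodesic (cr (1/2)) (cl (1/2)) cm"
    using hgeodesic_exists by blast
  have "(cm (1/2), 1/2) \<in> conv_in pseg H2R (insert x0 K)"
    unfolding conv_in_def
  proof (intro InterI, clarify)
    fix C assume C: "convex_in pseg H2R C" "insert x0 K \<subseteq> C"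
    then show "(cm (1/2), 1/2) \<in> C"
      using convex_in_pseg_midpoint_of_midpoints[OF C(1), of x0 "(right_point, 0)" "(left_point, 0)"]
        cr cl cm ends by (auto simp: x0_def)
  qed
  moreover have "(cm (1/2), 1/2) \<notin> pseg x0 (a, 0)" if "a \<in> hseg right_point left_point" for a
  proof
    assume "(cm (1/2), 1/2) \<in> pseg x0 (a, 0)"
    then obtain c where "hgeodesic \<i> a c" and "cm (1/2) = c (1/2)"
      using pseg_at_midheight[of "cm (1/2)" x0 "(a, 0)"] by (auto simp: x0_def)
    then show False
      using midpoint_ne_midpoint_of_midpoints[OF that _ cr cl cm] by metis
  qed
  ultimately show False
    using hull by (auto simp: K_def)
qed

theorem theorem3:
  shows "drop_complete hseg H2 \<and> \<not> drop_complete pseg H2R"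
  using hyperbolic.drop_complete not_drop_complete_H2R by blast

end
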